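(* Let $\mathfrak{A}\subset\mathfrak{F}=\mathbb{C}(x_1,\ldots,x_n)$ be the cluster algebra of geometric type defined by an initial seed $(\mathbf{x},B)$, $\mathbf{x}=(x_1,\ldots,x_n)$, where $B=(b_{ij})$ is an $m\times n$ integer matrix ($m\le n$) whose principal $m\times m$ submatrix is skew-symmetrizable, and let $\Lambda=(\lambda_{ij})$ be a skew-symmetric $n\times n$ matrix such that the log-canonical Poisson bracket $\{x_i,x_j\}_\Lambda=\lambda_{ij}x_ix_j$ (extended to $\mathfrak{F}$) is compatible with $\mathfrak{A}$. Then $\{\cdot,\cdot\}_\Lambda$ restricts to a Poisson algebra structure on the upper bound $\mathcal{U}_{\mathbf{x},B}(\mathfrak{A})$ and on the upper cluster algebra $\mathcal{U}(\mathfrak{A})$; i.e. both are closed under $\{\cdot,\cdot\}_\Lambda$.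
   Context: Cluster mutation: for $1\le i\le m$ the exchange polynomial is $P_i=\prod_{k=1}^n x_k^{\max(b_{ik},0)}+\prod_{k=1}^n x_k^{-\min(b_{ik},0)}$, and $y_i\in\mathfrak{F}$ is defined by $x_iy_i=P_i$; the new extended cluster is $(x_1,\ldots,x_{i-1},y_i,x_{i+1},\ldots,x_n)$, with exchange matrix obtained by the usual Fomin–Zelevinsky matrix mutation; $x_{m+1},\ldots,x_n$ are frozen and never mutated. The cluster algebra is the subalgebra of $\mathfrak{F}$ generated by all cluster variables of all seeds mutation equivalent to $(\mathbf{x},B)$. A Poisson bracket on $\mathfrak{F}$ is log-canonical with respect to an extended cluster $(z_1,\ldots,z_n)$ if $\{z_i,z_j\}=c_{ij}z_iz_j$ with $c_{ij}\in\mathbb{C}$; it is compatible with $\mathfrak{A}$ if it is log-canonical with respect to every extended cluster. The upper bound is $\mathcal{U}_{\mathbf{x},B}(\mathfrak{A})=\bigcap_{j=1}^m\mathbb{C}[x_1^{\pm1},\ldots,x_{j-1}^{\pm1},x_j,y_j,x_{j+1}^{\pm1},\ldots,x_m^{\pm1},x_{m+1},\ldots,x_n]$, and the upper cluster algebra $\mathcal{U}(\mathfrak{A})$ is the intersection of the upper bounds $\mathcal{U}_{\mathbf{x}',B'}(\mathfrak{A})$ over all seeds $(\mathbf{x}',B')$ mutation equivalent to $(\mathbf{x},B)$. *)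

theory Defs
  imports Complex_Main "HOL-Library.Poly_Mapping" "HOL-Computational_Algebra.Fraction_Field"
begin

text \<open>The ambient field: rational functions over the complex numbers, realised as the
fraction field of multivariate polynomials (monomials are finitely supported exponent
vectors indexed by nat).  Variables are indexed 1..n.\<close>

type_synonym rf = "((nat \<Rightarrow>\<^sub>0 nat) \<Rightarrow>\<^sub>0 complex) fract"

definition cst :: "complex \<Rightarrow> rf" where
  "cst c = Fract (Poly_Mapping.single 0 c) 1"

definition var :: "nat \<Rightarrow> rf" where
  "var i = Fract (Poly_Mapping.single (Poly_Mapping.single i 1) 1) 1"

inductive_set ratfun :: "nat \<Rightarrow> rf set" for n :: nat where
  rf_cst: "cst c \<in> ratfun n"
| rf_var: "i \<in> {1..n} \<Longrightarrow> var i \<in> ratfun n"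
| rf_add: "f \<in> ratfun n \<Longrightarrow> g \<in> ratfun n \<Longrightarrow> f + g \<in> ratfun n"
| rf_mult: "f \<in> ratfun n \<Longrightarrow> g \<in> ratfun n \<Longrightarrow> f * g \<in> ratfun n"
| rf_uminus: "f \<in> ratfun n \<Longrightarrow> - f \<in> ratfun n"
| rf_inverse: "f \<in> ratfun n \<Longrightarrow> inverse f \<in> ratfun n"

inductive_set alg_gen :: "rf set \<Rightarrow> rf set" for S :: "rf set" where
  ag_cst: "cst c \<in> alg_gen S"
| ag_gen: "s \<in> S \<Longrightarrow> s \<in> alg_gen S"
| ag_add: "f \<in> alg_gen S \<Longrightarrow> g \<in> alg_gen S \<Longrightarrow> f + g \<in> alg_gen S"
| ag_mult: "f \<in> alg_gen S \<Longrightarrow> g \<in> alg_gen S \<Longrightarrow> f * g \<in> alg_gen S"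

text \<open>Seeds: extended cluster (indices 1..n) and exchange matrix (rows 1..m, columns 1..n).\<close>
type_synonym seed = "(nat \<Rightarrow> rf) \<times> (nat \<Rightarrow> nat \<Rightarrow> int)"

definition exch_poly :: "nat \<Rightarrow> seed \<Rightarrow> nat \<Rightarrow> rf" where
  "exch_poly n s i =
     (\<Prod>k\<in>{1..n}. fst s k ^ nat (max (snd s i k) 0)) +
     (\<Prod>k\<in>{1..n}. fst s k ^ nat (- min (snd s i k) 0))"

definition exch_var :: "nat \<Rightarrow> seed \<Rightarrow> nat \<Rightarrow> rf" where
  "exch_var n s i = exch_poly n s i / fst s i"

definition mat_mut :: "nat \<Rightarrow> (nat \<Rightarrow> nat \<Rightarrow> int) \<Rightarrow> (nat \<Rightarrow> nat \<Rightarrow> int)" where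
  "mat_mut k B = (\<lambda>i j. if i = k \<or> j = k then - B i j
      else B i j + (\<bar>B i k\<bar> * B k j + B i k * \<bar>B k j\<bar>) div 2)"

definition mutate :: "nat \<Rightarrow> nat \<Rightarrow> seed \<Rightarrow> seed" where
  "mutate n k s = ((fst s)(k := exch_var n s k), mat_mut k (snd s))"

inductive_set mut_class :: "nat \<Rightarrow> nat \<Rightarrow> seed \<Rightarrow> seed set" for m n :: nat and s0 :: seed where
  mc_init: "s0 \<in> mut_class m n s0"
| mc_step: "s \<in> mut_class m n s0 \<Longrightarrow> k \<in> {1..m} \<Longrightarrow> mutate n k s \<in> mut_class m n s0"

text \<open>Generators of the ring C[x_1^{+-1},...,x_j,y_j,...,x_m^{+-1},x_{m+1},...,x_n].\<close>
definition laurent_gens :: "nat \<Rightarrow> nat \<Rightarrow> seed \<Rightarrow> nat \<Rightarrow> rf set" where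
  "laurent_gens m n s j =
     {fst s i | i. i \<in> {1..n}} \<union> {exch_var n s j} \<union>
     {inverse (fst s i) | i. i \<in> {1..m} \<and> i \<noteq> j}"

text \<open>Upper bound U_{x,B}(A) (an intersection inside F; equals F if m = 0).\<close>
definition upper_bound :: "nat \<Rightarrow> nat \<Rightarrow> seed \<Rightarrow> rf set" where
  "upper_bound m n s = {f \<in> ratfun n. \<forall>j\<in>{1..m}. f \<in> alg_gen (laurent_gens m n s j)}"

definition upper_cluster_algebra :: "nat \<Rightarrow> nat \<Rightarrow> seed \<Rightarrow> rf set" where
  "upper_cluster_algebra m n s0 =
     {f \<in> ratfun n. \<forall>s\<in>mut_class m n s0. f \<in> upper_bound m n s}"

definition log_canonical :: "(rf \<Rightarrow> rf \<Rightarrow> rf) \<Rightarrow> nat \<Rightarrow> (nat \<Rightarrow> rf) \<Rightarrow> bool" where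
  "log_canonical br n z =
     (\<forall>i\<in>{1..n}. \<forall>j\<in>{1..n}. \<exists>c::complex. br (z i) (z j) = cst c * z i * z j)"

definition compatible :: "(rf \<Rightarrow> rf \<Rightarrow> rf) \<Rightarrow> nat \<Rightarrow> nat \<Rightarrow> seed \<Rightarrow> bool" where
  "compatible br m n s0 = (\<forall>s\<in>mut_class m n s0. log_canonical br n (fst s))"

text \<open>br is the log-canonical bracket {x_i,x_j} = lambda_ij x_i x_j extended to F:
a C-bilinear skew-symmetric biderivation of F taking the prescribed values on the
generators (such an extension is unique).\<close>
definition is_lambda_bracket :: "nat \<Rightarrow> (nat \<Rightarrow> nat \<Rightarrow> complex) \<Rightarrow> (rf \<Rightarrow> rf \<Rightarrow> rf) \<Rightarrow> bool" where
  "is_lambda_bracket n \<Lambda> br =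
     ((\<forall>f\<in>ratfun n. \<forall>g\<in>ratfun n. \<forall>h\<in>ratfun n.
         br (f + g) h = br f h + br g h \<and>
         br (f * g) h = f * br g h + g * br f h) \<and>
      (\<forall>f\<in>ratfun n. \<forall>g\<in>ratfun n. \<forall>c. br (cst c * f) g = cst c * br f g) \<and>
      (\<forall>f\<in>ratfun n. \<forall>g\<in>ratfun n. br f g = - br g f) \<and>
      (\<forall>i\<in>{1..n}. \<forall>j\<in>{1..n}. br (var i) (var j) = cst (\<Lambda> i j) * var i * var j))"

end

theory Submission
  imports Defs
begin

text \<open>Fix a seed and a mutable index \<open>j\<close>. Every generator \<open>x\<^sub>i\<close>,
\<open>x\<^sub>i\<^sup>-\<^sup>1\<close>, \<open>y\<^sub>j\<close> of the ring
\<open>\<complex>[\<dots>, x\<^sub>j, y\<^sub>j, \<dots>]\<close> is a variable (or inverse) of the cluster of the seed or of its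
mutation at \<open>j\<close>, and by compatibility the bracket of two such elements of one cluster is a
scalar multiple of their product. The only pair not covered is \<open>(y\<^sub>j, x\<^sub>j)\<close>; for it the
exchange relation \<open>x\<^sub>j y\<^sub>j = M\<^sub>1 + M\<^sub>2\<close>, with monomials \<open>M\<^sub>k\<close> in the
cluster, gives \<open>x\<^sub>j {y\<^sub>j, x\<^sub>j} = {M\<^sub>1 + M\<^sub>2, x\<^sub>j} =
x\<^sub>j (c\<^sub>1 M\<^sub>1 + c\<^sub>2 M\<^sub>2)\<close>. So brackets of generators lie in the ring, and a
biderivation with this property preserves the whole ring. Intersecting over \<open>j\<close> and over all
seeds gives the theorem.\<close>

lemma cst_add: "cst (a + b) = cst a + cst b"
  by (simp add: cst_def single_add)

lemma cst_one: "cst 1 = 1"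
  by (simp add: cst_def One_fract_def)

lemma cst_zero: "cst 0 = 0"
  by (simp add: cst_def Zero_fract_def)

lemma cst_uminus: "cst (- a) = - cst a"
  by (simp add: cst_def single_uminus)

lemma two_rf_nonzero: "(2 :: rf) \<noteq> 0"
proof
  assume "(2 :: rf) = 0"
  then have "cst 2 = 0"
    using cst_add[of 1 1] cst_one by simp
  then have "Fract 2 1 = Fract 0 (1 :: (nat \<Rightarrow>\<^sub>0 nat) \<Rightarrow>\<^sub>0 complex)"
    by (simp add: cst_def Zero_fract_def)
  then have "Poly_Mapping.lookup (2 :: (nat \<Rightarrow>\<^sub>0 nat) \<Rightarrow>\<^sub>0 complex) 0 = 0"
    by (simp add: eq_fract)
  then show False
    unfolding lookup_numeral by simp
qed

lemma ratfun_one: "1 \<in> ratfun n"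
  using rf_cst[of 1 n] by (simp add: cst_one)

lemma ratfun_zero: "0 \<in> ratfun n"
  using rf_cst[of 0 n] by (simp add: cst_zero)

lemma ratfun_power: "a \<in> ratfun n \<Longrightarrow> a ^ e \<in> ratfun n"
  by (induction e) (auto intro: rf_mult ratfun_one)

lemma ratfun_prod: "finite A \<Longrightarrow> \<forall>k\<in>A. f k \<in> ratfun n \<Longrightarrow> prod f A \<in> ratfun n"
  by (induction A rule: finite_induct) (auto intro: rf_mult ratfun_one)

lemma alg_gen_one: "1 \<in> alg_gen S"
  using ag_cst[of 1 S] by (simp add: cst_one)

lemma alg_gen_zero: "0 \<in> alg_gen S"
  using ag_cst[of 0 S] by (simp add: cst_zero)

lemma alg_gen_uminus: "a \<in> alg_gen S \<Longrightarrow> - a \<in> alg_gen S"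
  using ag_mult[OF ag_cst[of "-1"]] by (simp add: cst_uminus cst_one)

lemma alg_gen_power: "a \<in> alg_gen S \<Longrightarrow> a ^ e \<in> alg_gen S"
  by (induction e) (auto intro: ag_mult alg_gen_one)

lemma alg_gen_prod: "finite A \<Longrightarrow> \<forall>k\<in>A. f k \<in> alg_gen S \<Longrightarrow> prod f A \<in> alg_gen S"
  by (induction A rule: finite_induct) (auto intro: ag_mult alg_gen_one)

lemma alg_gen_subset_ratfun:
  assumes S: "S \<subseteq> ratfun n"
  shows "alg_gen S \<subseteq> ratfun n"
proof
  fix f assume "f \<in> alg_gen S"
  then show "f \<in> ratfun n"
    by induction (use S in \<open>auto intro: rf_cst rf_add rf_mult\<close>)
qed

definition cluster_vars_and_inverses :: "nat \<Rightarrow> (nat \<Rightarrow> rf) \<Rightarrow> rf set" where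
  "cluster_vars_and_inverses n z = {z i |i. i \<in> {1..n}} \<union> {inverse (z i) |i. i \<in> {1..n}}"

lemma exch_var_ratfun:
  assumes "\<forall>k\<in>{1..n}. fst s k \<in> ratfun n" and "j \<in> {1..n}"
  shows "exch_var n s j \<in> ratfun n"
  using assms unfolding exch_var_def exch_poly_def divide_inverse
  by (auto intro!: rf_mult rf_add rf_inverse ratfun_prod ratfun_power)

lemma mut_class_ratfun:
  assumes "m \<le> n" and "\<forall>i\<in>{1..n}. fst s0 i \<in> ratfun n" and "s \<in> mut_class m n s0"
  shows "\<forall>i\<in>{1..n}. fst s i \<in> ratfun n"
  using assms(3)
proof induction
  case mc_init
  then show ?case using assms(2) .
next
  case (mc_step s k)
  then show ?case using assms(1) exch_var_ratfun[of n s k] by (auto simp: mutate_def)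
qed

locale skew_biderivation =
  fixes n :: nat and br :: "rf \<Rightarrow> rf \<Rightarrow> rf"
  assumes br_add_left: "\<lbrakk>f \<in> ratfun n; g \<in> ratfun n; h \<in> ratfun n\<rbrakk> \<Longrightarrow>
      br (f + g) h = br f h + br g h"
    and br_mult_left: "\<lbrakk>f \<in> ratfun n; g \<in> ratfun n; h \<in> ratfun n\<rbrakk> \<Longrightarrow>
      br (f * g) h = f * br g h + g * br f h"
    and br_cst_mult_left: "\<lbrakk>f \<in> ratfun n; g \<in> ratfun n\<rbrakk> \<Longrightarrow> br (cst c * f) g = cst c * br f g"
    and br_skew: "\<lbrakk>f \<in> ratfun n; g \<in> ratfun n\<rbrakk> \<Longrightarrow> br f g = - br g f"
    and br_var_var_ratfun: "\<lbrakk>i \<in> {1..n}; j \<in> {1..n}\<rbrakk> \<Longrightarrow> br (var i) (var j) \<in> ratfun n"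
begin

lemma br_one_left:
  assumes "h \<in> ratfun n"
  shows "br 1 h = 0"
proof -
  have "br 1 h = br 1 h + br 1 h"
    using br_mult_left[OF ratfun_one ratfun_one assms] by (simp only: mult_1)
  then show ?thesis
    by (simp only: add_cancel_right_right)
qed

lemma br_cst_left: "h \<in> ratfun n \<Longrightarrow> br (cst c) h = 0"
  using br_cst_mult_left[OF ratfun_one, of h c] br_one_left[of h] by simp

lemma br_zero_left: "h \<in> ratfun n \<Longrightarrow> br 0 h = 0"
  using br_cst_left[of h 0] by (simp add: cst_zero)

lemma br_uminus_left: "\<lbrakk>f \<in> ratfun n; h \<in> ratfun n\<rbrakk> \<Longrightarrow> br (- f) h = - br f h"
  using br_cst_mult_left[of f h "-1"] by (simp add: cst_uminus cst_one)

lemma br_inverse_left: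
  assumes f: "f \<in> ratfun n" and h: "h \<in> ratfun n"
  shows "br (inverse f) h = - (inverse f * inverse f) * br f h"
proof (cases "f = 0")
  case True
  then show ?thesis using br_zero_left h by simp
next
  case False
  have "0 = br (f * inverse f) h"
    using False br_one_left h by simp
  also have "\<dots> = f * br (inverse f) h + inverse f * br f h"
    using br_mult_left f rf_inverse[OF f] h by blast
  finally have "f * br (inverse f) h = - (inverse f * br f h)"
    by (simp add: eq_neg_iff_add_eq_0)
  then have "inverse f * (f * br (inverse f) h) = - (inverse f * inverse f) * br f h"
    by simp
  then show ?thesis
    using False by (simp add: mult.assoc[symmetric])
qed

lemma br_self: "a \<in> ratfun n \<Longrightarrow> br a a = 0"
  using br_skew[of a a] two_rf_nonzero by (simp add: eq_neg_iff_add_eq_0 mult_2[symmetric])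

lemma br_cst_right: "h \<in> ratfun n \<Longrightarrow> br h (cst c) = 0"
  using br_skew[OF _ rf_cst, of h c] br_cst_left by simp

lemma br_add_right: "\<lbrakk>f \<in> ratfun n; g \<in> ratfun n; h \<in> ratfun n\<rbrakk> \<Longrightarrow>
    br h (f + g) = br h f + br h g"
  using br_skew[of h "f + g"] br_add_left[of f g h] br_skew[of h f] br_skew[of h g] rf_add
  by simp

lemma br_mult_right: "\<lbrakk>f \<in> ratfun n; g \<in> ratfun n; h \<in> ratfun n\<rbrakk> \<Longrightarrow>
    br h (f * g) = f * br h g + g * br h f"
  using br_skew[of h "f * g"] br_mult_left[of f g h] br_skew[of h f] br_skew[of h g] rf_mult
  by simp

lemma br_uminus_right: "\<lbrakk>f \<in> ratfun n; h \<in> ratfun n\<rbrakk> \<Longrightarrow> br h (- f) = - br h f"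
  using br_skew[of h "- f"] br_uminus_left[of f h] br_skew[of h f] rf_uminus by simp

lemma br_inverse_right: "\<lbrakk>f \<in> ratfun n; h \<in> ratfun n\<rbrakk> \<Longrightarrow>
    br h (inverse f) = - (inverse f * inverse f) * br h f"
  using br_skew[of h "inverse f"] br_inverse_left[of f h] br_skew[of h f] rf_inverse by simp

lemma br_var_right_ratfun:
  assumes "f \<in> ratfun n" and j: "j \<in> {1..n}"
  shows "br f (var j) \<in> ratfun n"
  using assms(1)
proof induction
  case (rf_cst c)
  then show ?case using br_cst_left rf_var j ratfun_zero by simp
next
  case (rf_var i)
  then show ?case using br_var_var_ratfun j by simp
next
  case (rf_add f g)
  then show ?case using br_add_left rf_var j ratfun.rf_add by simp
next
  case (rf_mult f g)
  then show ?case using br_mult_left rf_var j ratfun.rf_add ratfun.rf_mult by simp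
next
  case (rf_uminus f)
  then show ?case using br_uminus_left rf_var j ratfun.rf_uminus by simp
next
  case (rf_inverse f)
  then show ?case
    using br_inverse_left rf_var j ratfun.rf_uminus ratfun.rf_mult ratfun.rf_inverse by simp
qed

lemma br_ratfun:
  assumes "f \<in> ratfun n" and "g \<in> ratfun n"
  shows "br f g \<in> ratfun n"
  using assms(2)
proof induction
  case (rf_cst c)
  then show ?case using br_cst_right assms(1) ratfun_zero by simp
next
  case (rf_var i)
  then show ?case using br_var_right_ratfun assms(1) by simp
next
  case (rf_add g g')
  then show ?case using br_add_right assms(1) ratfun.rf_add by simp
next
  case (rf_mult g g')
  then show ?case using br_mult_right assms(1) ratfun.rf_add ratfun.rf_mult by simp
next
  case (rf_uminus g)
  then show ?case using br_uminus_right assms(1) ratfun.rf_uminus by simp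
next
  case (rf_inverse g)
  then show ?case
    using br_inverse_right assms(1) ratfun.rf_uminus ratfun.rf_mult ratfun.rf_inverse by simp
qed

lemma br_alg_gen:
  assumes S: "S \<subseteq> ratfun n" and gens: "\<And>a b. \<lbrakk>a \<in> S; b \<in> S\<rbrakk> \<Longrightarrow> br a b \<in> alg_gen S"
    and f: "f \<in> alg_gen S" and g: "g \<in> alg_gen S"
  shows "br f g \<in> alg_gen S"
proof -
  have R: "x \<in> alg_gen S \<Longrightarrow> x \<in> ratfun n" for x
    using alg_gen_subset_ratfun[OF S] by blast
  have gen_right: "br f' b \<in> alg_gen S" if b: "b \<in> S" and f': "f' \<in> alg_gen S" for b f'
    using f'
  proof induction
    case (ag_cst c)
    then show ?case using br_cst_left S b alg_gen_zero by auto
  next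
    case (ag_gen s)
    then show ?case using gens b by blast
  next
    case (ag_add f g)
    then show ?case using br_add_left R S b alg_gen.ag_add by auto
  next
    case (ag_mult f g)
    then show ?case using br_mult_left R S b alg_gen.ag_add alg_gen.ag_mult by auto
  qed
  from g show ?thesis
  proof induction
    case (ag_cst c)
    then show ?case using br_cst_right R f alg_gen_zero by auto
  next
    case (ag_gen s)
    then show ?case using gen_right f by blast
  next
    case (ag_add g g')
    then show ?case using br_add_right R f alg_gen.ag_add by auto
  next
    case (ag_mult g g')
    then show ?case using br_mult_right R f alg_gen.ag_add alg_gen.ag_mult by auto
  qed
qed

definition log_canonical_pair :: "rf \<Rightarrow> rf \<Rightarrow> bool" where
  "log_canonical_pair a b \<longleftrightarrow> (\<exists>c. br a b = cst c * a * b)"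

lemma log_canonical_pair_alg_gen:
  "\<lbrakk>log_canonical_pair a b; a \<in> alg_gen S; b \<in> alg_gen S\<rbrakk> \<Longrightarrow> br a b \<in> alg_gen S"
  unfolding log_canonical_pair_def by (auto intro!: ag_mult[OF ag_mult[OF ag_cst]])

lemma log_canonical_pair_commute:
  assumes "a \<in> ratfun n" "b \<in> ratfun n" "log_canonical_pair a b"
  shows "log_canonical_pair b a"
proof -
  obtain c where "br a b = cst c * a * b"
    using assms(3) log_canonical_pair_def by blast
  then have "br b a = cst (- c) * b * a"
    using br_skew[OF assms(2,1)] by (simp add: cst_uminus)
  then show ?thesis
    unfolding log_canonical_pair_def by blast
qed

lemma log_canonical_pair_inverse_right:
  assumes "a \<in> ratfun n" "b \<in> ratfun n" "log_canonical_pair a b"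
  shows "log_canonical_pair a (inverse b)"
proof -
  obtain c where c: "br a b = cst c * a * b"
    using assms(3) log_canonical_pair_def by blast
  have "br a (inverse b) = cst (- c) * a * inverse b"
  proof (cases "b = 0")
    case True
    then show ?thesis using br_cst_right[OF assms(1), of 0] by (simp add: cst_zero)
  next
    case False
    then show ?thesis
      using br_inverse_right[OF assms(2,1)] c by (simp add: cst_uminus field_simps)
  qed
  then show ?thesis
    unfolding log_canonical_pair_def by blast
qed

lemma log_canonical_pair_inverse_left:
  assumes "a \<in> ratfun n" "b \<in> ratfun n" "log_canonical_pair a b"
  shows "log_canonical_pair (inverse a) b"
  using log_canonical_pair_commute[OF assms(2) rf_inverse[OF assms(1)]
      log_canonical_pair_inverse_right[OF assms(2,1) log_canonical_pair_commute[OF assms]]] .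

lemma log_canonical_pair_one_left: "x \<in> ratfun n \<Longrightarrow> log_canonical_pair 1 x"
  unfolding log_canonical_pair_def using br_one_left by (auto intro: exI[of _ 0] simp: cst_zero)

lemma log_canonical_pair_mult_left:
  assumes "a \<in> ratfun n" "b \<in> ratfun n" "x \<in> ratfun n"
    and "log_canonical_pair a x" "log_canonical_pair b x"
  shows "log_canonical_pair (a * b) x"
proof -
  obtain c1 c2 where "br a x = cst c1 * a * x" "br b x = cst c2 * b * x"
    using assms(4,5) log_canonical_pair_def by blast
  then have "br (a * b) x = cst (c1 + c2) * (a * b) * x"
    using br_mult_left[OF assms(1-3)] by (simp add: cst_add algebra_simps)
  then show ?thesis
    unfolding log_canonical_pair_def by blast
qed

lemma log_canonical_pair_power_left:
  "\<lbrakk>a \<in> ratfun n; x \<in> ratfun n; log_canonical_pair a x\<rbrakk> \<Longrightarrow> log_canonical_pair (a ^ e) x"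
  by (induction e)
    (auto intro: log_canonical_pair_one_left log_canonical_pair_mult_left ratfun_power)

lemma log_canonical_pair_monomial_left:
  assumes "finite A" "x \<in> ratfun n" "\<forall>k\<in>A. z k \<in> ratfun n \<and> log_canonical_pair (z k) x"
  shows "log_canonical_pair (\<Prod>k\<in>A. z k ^ e k) x"
  using assms
proof (induction A rule: finite_induct)
  case empty
  then show ?case using log_canonical_pair_one_left by simp
next
  case (insert a A)
  moreover have "(\<Prod>k\<in>A. z k ^ e k) \<in> ratfun n"
    using insert by (auto intro!: ratfun_prod ratfun_power)
  ultimately show ?case
    by (auto intro!: log_canonical_pair_mult_left log_canonical_pair_power_left ratfun_power)
qed

lemma log_canonical_pair_cluster_vars_and_inverses:
  assumes lc: "log_canonical br n z" and z: "\<forall>i\<in>{1..n}. z i \<in> ratfun n"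
    and a: "a \<in> cluster_vars_and_inverses n z" and b: "b \<in> cluster_vars_and_inverses n z"
  shows "log_canonical_pair a b"
proof -
  have zz: "log_canonical_pair (z i) (z k)" if "i \<in> {1..n}" "k \<in> {1..n}" for i k
    using lc that unfolding log_canonical_def log_canonical_pair_def by blast
  have b_ratfun: "b \<in> ratfun n"
    using b z unfolding cluster_vars_and_inverses_def by (auto intro: rf_inverse)
  have zb: "log_canonical_pair (z i) b" if "i \<in> {1..n}" for i
    using b zz that z log_canonical_pair_inverse_right
    unfolding cluster_vars_and_inverses_def by auto
  then show ?thesis
    using a z b_ratfun log_canonical_pair_inverse_left
    unfolding cluster_vars_and_inverses_def by auto
qed

lemma br_exch_var_cluster_var:
  assumes lc: "log_canonical br n (fst s)" and X: "\<forall>i\<in>{1..n}. fst s i \<in> ratfun n"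
    and XS: "\<forall>i\<in>{1..n}. fst s i \<in> alg_gen S" and j: "j \<in> {1..n}"
  shows "br (exch_var n s j) (fst s j) \<in> alg_gen S"
proof (cases "fst s j = 0")
  case True
  \<comment> \<open>then \<open>y\<^sub>j = P\<^sub>j / 0 = 0\<close>\<close>
  then show ?thesis
    using br_zero_left[OF ratfun_zero] by (simp add: exch_var_def alg_gen_zero)
next
  case False
  let ?x = "fst s j" and ?y = "exch_var n s j"
  define M1 where "M1 = (\<Prod>k\<in>{1..n}. fst s k ^ nat (max (snd s j k) 0))"
  define M2 where "M2 = (\<Prod>k\<in>{1..n}. fst s k ^ nat (- min (snd s j k) 0))"
  have exchange_relation: "?y * ?x = M1 + M2"
    using False unfolding exch_var_def exch_poly_def M1_def M2_def by simp
  have x: "?x \<in> ratfun n" and y: "?y \<in> ratfun n"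
    using X j exch_var_ratfun by auto
  have M: "M1 \<in> ratfun n" "M2 \<in> ratfun n"
    unfolding M1_def M2_def using X by (auto intro!: ratfun_prod ratfun_power)
  have "log_canonical_pair (fst s k) ?x" if "k \<in> {1..n}" for k
    using lc that j unfolding log_canonical_def log_canonical_pair_def by blast
  then have "log_canonical_pair M1 ?x" "log_canonical_pair M2 ?x"
    unfolding M1_def M2_def using X x by (auto intro!: log_canonical_pair_monomial_left)
  then obtain c1 c2 where c: "br M1 ?x = cst c1 * M1 * ?x" "br M2 ?x = cst c2 * M2 * ?x"
    unfolding log_canonical_pair_def by blast
  have "?x * br ?y ?x = br (?y * ?x) ?x"
    using br_mult_left[OF y x x] br_self[OF x] by simp
  also have "\<dots> = ?x * (cst c1 * M1 + cst c2 * M2)"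
    unfolding exchange_relation br_add_left[OF M x] c by (simp add: algebra_simps)
  finally have "br ?y ?x = cst c1 * M1 + cst c2 * M2"
    using False by simp
  moreover have "M1 \<in> alg_gen S" "M2 \<in> alg_gen S"
    unfolding M1_def M2_def using XS by (auto intro!: alg_gen_prod alg_gen_power)
  ultimately show ?thesis
    by (auto intro!: alg_gen.ag_add ag_mult ag_cst)
qed

lemma br_laurent_gens:
  assumes mn: "m \<le> n" and j: "j \<in> {1..m}" and X: "\<forall>i\<in>{1..n}. fst s i \<in> ratfun n"
    and lc: "log_canonical br n (fst s)" and lc_mut: "log_canonical br n (fst (mutate n j s))"
    and a: "a \<in> laurent_gens m n s j" and b: "b \<in> laurent_gens m n s j"
  shows "br a b \<in> alg_gen (laurent_gens m n s j)"
proof -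
  let ?G = "laurent_gens m n s j" and ?x = "fst s j" and ?y = "exch_var n s j"
  let ?CX = "cluster_vars_and_inverses n (fst s)"
    and ?CZ = "cluster_vars_and_inverses n (fst (mutate n j s))"
  have jn: "j \<in> {1..n}"
    using j mn by auto
  have Z: "\<forall>i\<in>{1..n}. fst (mutate n j s) i \<in> ratfun n"
    using X exch_var_ratfun[OF X jn] by (simp add: mutate_def)
  have G_X: "?G \<subseteq> ?CX \<union> {?y}"
    using mn unfolding laurent_gens_def cluster_vars_and_inverses_def by auto
  have G_Z: "?G \<subseteq> ?CZ \<union> {?x}"
    using mn jn unfolding laurent_gens_def cluster_vars_and_inverses_def mutate_def
    by auto
  have X_G: "\<forall>i\<in>{1..n}. fst s i \<in> alg_gen ?G"
    unfolding laurent_gens_def by (blast intro: ag_gen)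
  have in_G: "a \<in> alg_gen ?G" "b \<in> alg_gen ?G"
    using a b by (auto intro: ag_gen)
  have yx: "br ?y ?x \<in> alg_gen ?G"
    using br_exch_var_cluster_var[OF lc X X_G jn] .
  then have xy: "br ?x ?y \<in> alg_gen ?G"
    using br_skew[of ?x ?y] X jn exch_var_ratfun[OF X jn] alg_gen_uminus by simp
  have "?x \<in> ?CX"
    using jn unfolding cluster_vars_and_inverses_def by blast
  then consider "a \<in> ?CX" "b \<in> ?CX" | "a \<in> ?CZ" "b \<in> ?CZ"
    | "a = ?y" "b = ?x" | "a = ?x" "b = ?y"
    using G_X G_Z a b by blast
  then show ?thesis
  proof cases
    case 1
    then show ?thesis
      using log_canonical_pair_cluster_vars_and_inverses[OF lc X]
        log_canonical_pair_alg_gen in_G by blast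
  next
    case 2
    then show ?thesis
      using log_canonical_pair_cluster_vars_and_inverses[OF lc_mut Z]
        log_canonical_pair_alg_gen in_G by blast
  qed (use yx xy in simp_all)
qed

lemma upper_bound_br_closed:
  assumes mn: "m \<le> n" and comp: "compatible br m n s0"
    and X0: "\<forall>i\<in>{1..n}. fst s0 i \<in> ratfun n" and s: "s \<in> mut_class m n s0"
    and f: "f \<in> upper_bound m n s" and g: "g \<in> upper_bound m n s"
  shows "br f g \<in> upper_bound m n s"
proof -
  have X: "\<forall>i\<in>{1..n}. fst s i \<in> ratfun n"
    using mut_class_ratfun[OF mn X0 s] .
  have "br f g \<in> alg_gen (laurent_gens m n s j)" if j: "j \<in> {1..m}" for j
  proof (rule br_alg_gen)
    show "laurent_gens m n s j \<subseteq> ratfun n"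
      using X exch_var_ratfun[OF X] mn j unfolding laurent_gens_def by (auto intro: rf_inverse)
    have "log_canonical br n (fst s)" "log_canonical br n (fst (mutate n j s))"
      using comp s mc_step[OF s j] unfolding compatible_def by blast+
    then show "br a b \<in> alg_gen (laurent_gens m n s j)"
      if "a \<in> laurent_gens m n s j" "b \<in> laurent_gens m n s j" for a b
      using br_laurent_gens[OF mn j X] that by blast
    show "f \<in> alg_gen (laurent_gens m n s j)" "g \<in> alg_gen (laurent_gens m n s j)"
      using f g j unfolding upper_bound_def by auto
  qed
  moreover have "br f g \<in> ratfun n"
    using f g br_ratfun unfolding upper_bound_def by blast
  ultimately show ?thesis
    unfolding upper_bound_def by blast
qed

lemma upper_cluster_algebra_br_closed:
  assumes "m \<le> n" and "compatible br m n s0" and "\<forall>i\<in>{1..n}. fst s0 i \<in> ratfun n"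
    and f: "f \<in> upper_cluster_algebra m n s0" and g: "g \<in> upper_cluster_algebra m n s0"
  shows "br f g \<in> upper_cluster_algebra m n s0"
proof -
  have "f \<in> ratfun n" "g \<in> ratfun n"
    using f g unfolding upper_cluster_algebra_def by auto
  moreover have "br f g \<in> upper_bound m n s" if "s \<in> mut_class m n s0" for s
    using upper_bound_br_closed[OF assms(1-3) that] f g that
    unfolding upper_cluster_algebra_def by blast
  ultimately show ?thesis
    unfolding upper_cluster_algebra_def using br_ratfun by blast
qed

end

lemma skew_biderivation_lambda_bracket:
  assumes "is_lambda_bracket n \<Lambda> br"
  shows "skew_biderivation n br"
proof -
  obtain leibniz: "\<forall>f\<in>ratfun n. \<forall>g\<in>ratfun n. \<forall>h\<in>ratfun n.
      br (f + g) h = br f h + br g h \<and> br (f * g) h = f * br g h + g * br f h"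
    and cst_mult: "\<forall>f\<in>ratfun n. \<forall>g\<in>ratfun n. \<forall>c. br (cst c * f) g = cst c * br f g"
    and skew: "\<forall>f\<in>ratfun n. \<forall>g\<in>ratfun n. br f g = - br g f"
    and vars: "\<forall>i\<in>{1..n}. \<forall>j\<in>{1..n}. br (var i) (var j) = cst (\<Lambda> i j) * var i * var j"
    using assms unfolding is_lambda_bracket_def by (elim conjE) (rule that)
  show ?thesis
  proof
    fix f g h assume fgh: "f \<in> ratfun n" "g \<in> ratfun n" "h \<in> ratfun n"
    show "br (f + g) h = br f h + br g h" "br (f * g) h = f * br g h + g * br f h"
      using leibniz[rule_format, OF fgh] by (rule conjunct1, rule conjunct2)
  next
    fix f g c assume fg: "f \<in> ratfun n" "g \<in> ratfun n"
    show "br (cst c * f) g = cst c * br f g"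
      by (rule cst_mult[rule_format, OF fg])
    show "br f g = - br g f"
      by (rule skew[rule_format, OF fg])
  next
    fix i j assume ij: "i \<in> {1..n}" "j \<in> {1..n}"
    show "br (var i) (var j) \<in> ratfun n"
      unfolding vars[rule_format, OF ij] using ij by (intro rf_mult rf_cst rf_var)
  qed
qed

theorem mainTheorem1:
  fixes m n :: nat and B :: "nat \<Rightarrow> nat \<Rightarrow> int" and \<Lambda> :: "nat \<Rightarrow> nat \<Rightarrow> complex"
    and br :: "rf \<Rightarrow> rf \<Rightarrow> rf"
  assumes "m \<le> n"
    and "\<exists>d :: nat \<Rightarrow> int. (\<forall>i\<in>{1..m}. d i > 0) \<and>
           (\<forall>i\<in>{1..m}. \<forall>j\<in>{1..m}. d i * B i j = - (d j * B j i))"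
    and "\<forall>i\<in>{1..n}. \<forall>j\<in>{1..n}. \<Lambda> i j = - \<Lambda> j i"
    and "is_lambda_bracket n \<Lambda> br"
    and "compatible br m n (var, B)"
  shows "(\<forall>f\<in>upper_bound m n (var, B). \<forall>g\<in>upper_bound m n (var, B).
            br f g \<in> upper_bound m n (var, B)) \<and>
         (\<forall>f\<in>upper_cluster_algebra m n (var, B). \<forall>g\<in>upper_cluster_algebra m n (var, B).
            br f g \<in> upper_cluster_algebra m n (var, B))"
proof -
  interpret skew_biderivation n br
    using skew_biderivation_lambda_bracket[OF assms(4)] .
  have vars: "\<forall>i\<in>{1..n}. fst (var, B) i \<in> ratfun n"
    by (auto intro: rf_var)
  show ?thesis
    using upper_bound_br_closed[OF assms(1,5) vars mc_init]
      upper_cluster_algebra_br_closed[OF assms(1,5) vars] by blast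
qed

end
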